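(* Let $d\in\mathbb{N}$, $\mathcal{D}_0=\mathcal{D}(\mathbb{R}^d)$, and let $\mathcal{D}_1,\mathcal{D}_2,\dots$ be the sets defined in the context. Then: (i) $\mathcal{D}_0\supseteq\mathcal{D}_1\supseteq\mathcal{D}_2\supseteq\cdots$; (ii) $\mathcal{D}_n\neq\varnothing$ for every $n\in\mathbb{N}$; (iii) $\bigcap_{n=0}^\infty\mathcal{D}_n=\varnothing$.
   Context: $\mathcal{D}(\mathbb{R}^d)$ is the space of $C^\infty$ functions $\mathbb{R}^d\to\mathbb{C}$ with compact support. For $\varphi\in\mathcal{D}_0$ let $R_\varphi=\sup\{\|x\|:x\in\mathbb{R}^d,\ \varphi(x)\neq0\}$ if $\varphi\neq0$ and $R_\varphi=1$ if $\varphi=0$. For $n\in\mathbb{N}$, $\mathcal{D}_n$ is the set of all $\varphi\in\mathcal{D}_0$ such that: $\varphi$ is real-valued; $\varphi(-x)=\varphi(x)$ for all $x\in\mathbb{R}^d$; $R_\varphi\le 1/n$; $\int_{\mathbb{R}^d}\varphi(x)\,dx=1$; $\int_{\mathbb{R}^d}x^\alpha\varphi(x)\,dx=0$ for all $\alpha\in\mathbb{N}_0^d$ with $1\le|\alpha|\le n$; $\int_{\mathbb{R}^d}|\varphi(x)|\,dx\le 1+\frac1n$; and $\sup_{x\in\mathbb{R}^d}|\partial^\alpha\varphi(x)|\le (R_\varphi)^{-2(|\alpha|+d)}$ for all $\alpha\in\mathbb{N}_0^d$ with $|\alpha|\le n$. *)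

theory Defs
  imports "HOL-Analysis.Analysis"
begin

text \<open>Points of R^d are vectors of type real^'n, with d = CARD('n).
  Partial derivative in direction of the i-th coordinate axis.\<close>
definition pdiff :: "'n::finite \<Rightarrow> (real^'n \<Rightarrow> complex) \<Rightarrow> real^'n \<Rightarrow> complex" where
  "pdiff i f = (\<lambda>x. vector_derivative (\<lambda>t. f (x + t *\<^sub>R axis i 1)) (at 0))"

fun iter_pd :: "'n::finite list \<Rightarrow> (real^'n \<Rightarrow> complex) \<Rightarrow> real^'n \<Rightarrow> complex" where
  "iter_pd [] f = f"
| "iter_pd (i # is) f = pdiff i (iter_pd is f)"

definition smooth_fun :: "(real^'n::finite \<Rightarrow> complex) \<Rightarrow> bool" where
  "smooth_fun f \<longleftrightarrow> (\<forall>is. continuous_on UNIV (iter_pd is f) \<and>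
      (\<forall>i x. (\<lambda>t. iter_pd is f (x + t *\<^sub>R axis i 1)) differentiable (at 0)))"

text \<open>Multi-index partial derivative: differentiate alpha i times in direction i
  (the order is irrelevant for smooth functions).\<close>
definition mpd :: "('n::finite \<Rightarrow> nat) \<Rightarrow> (real^'n \<Rightarrow> complex) \<Rightarrow> real^'n \<Rightarrow> complex" where
  "mpd \<alpha> f = iter_pd (SOME is. \<forall>i. count_list is i = \<alpha> i) f"

definition mabs :: "('n::finite \<Rightarrow> nat) \<Rightarrow> nat" where
  "mabs \<alpha> = (\<Sum>i\<in>UNIV. \<alpha> i)"

definition mono_pow :: "real^'n::finite \<Rightarrow> ('n \<Rightarrow> nat) \<Rightarrow> real" where
  "mono_pow x \<alpha> = (\<Prod>i\<in>UNIV. (x $ i) ^ \<alpha> i)"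

definition D0 :: "(real^'n::finite \<Rightarrow> complex) set" where
  "D0 = {f. smooth_fun f \<and> compact (closure {x. f x \<noteq> 0})}"

definition Rad :: "(real^'n::finite \<Rightarrow> complex) \<Rightarrow> real" where
  "Rad f = (if (\<forall>x. f x = 0) then 1 else Sup {norm x | x. f x \<noteq> 0})"

definition Dn :: "nat \<Rightarrow> (real^'n::finite \<Rightarrow> complex) set" where
  "Dn n = (if n = 0 then D0 else
     {\<phi> \<in> D0.
        (\<forall>x. Im (\<phi> x) = 0) \<and>
        (\<forall>x. \<phi> (- x) = \<phi> x) \<and>
        Rad \<phi> \<le> 1 / real n \<and>
        integral UNIV \<phi> = 1 \<and>
        (\<forall>\<alpha>. 1 \<le> mabs \<alpha> \<and> mabs \<alpha> \<le> n \<longrightarrow>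
            integral UNIV (\<lambda>x. complex_of_real (mono_pow x \<alpha>) * \<phi> x) = 0) \<and>
        integral UNIV (\<lambda>x. cmod (\<phi> x)) \<le> 1 + 1 / real n \<and>
        (\<forall>\<alpha>. mabs \<alpha> \<le> n \<longrightarrow>
            (\<forall>x. cmod (mpd \<alpha> \<phi> x) \<le> inverse (Rad \<phi> ^ (2 * (mabs \<alpha> + CARD('n))))))})"

end

theory Submission
  imports Defs "HOL-Computational_Algebra.Polynomial"
begin

text \<open>
  Monotonicity is read off the definition, and the intersection is empty because a function in
  every \<open>D n\<close> would have support radius at most \<open>1/n\<close> for all \<open>n\<close>, hence vanish almost
  everywhere, contradicting \<open>\<integral>\<phi> = 1\<close>.

  For \<open>D n \<noteq> {}\<close>, start from the even bump \<open>b t = exp (-1/(1+t)) * exp (-1/(1-t))\<close> on \<open>[-1,1]\<close>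
  and kill its moments one at a time. The dilate \<open>f\<^sub>s t = f (t/s) / s\<close> has the same mass as \<open>f\<close>
  and \<open>j\<close>-th moment \<open>s^j\<close> times that of \<open>f\<close>, so \<open>(s^k * f - f\<^sub>s) / (s^k - 1)\<close> keeps the mass and
  the vanishing moments of \<open>f\<close>, has vanishing \<open>k\<close>-th moment, and has \<open>L\<^sup>1\<close> norm at most
  \<open>(1+s)/(1-s)\<close> times that of \<open>f\<close>. For small \<open>s\<close> this yields an even profile with vanishing
  moments of orders \<open>1..n\<close> and \<open>L\<^sup>1\<close> norm close to 1. Rescaled to support \<open>[-a,a]\<close> and
  tensored over the \<open>d\<close> coordinates, it lies in \<open>D n\<close> once \<open>a\<close> is small: its support radius is at
  most \<open>d * a\<close>, while its derivatives of order \<open>\<alpha>\<close> are only of size \<open>a^-(|\<alpha>| + d)\<close>.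
\<close>

section \<open>Derivative towers\<close>

definition deriv_tower :: "(nat \<Rightarrow> real \<Rightarrow> real) \<Rightarrow> bool" where
  "deriv_tower D \<longleftrightarrow> (\<forall>m x. (D m has_real_derivative D (Suc m) x) (at x))"

lemma deriv_tower_continuous: "deriv_tower D \<Longrightarrow> continuous_on UNIV (D m)"
  unfolding deriv_tower_def by (meson DERIV_isCont continuous_at_imp_continuous_on)

lemma deriv_tower_vanishing:
  assumes "deriv_tower D" "\<And>t. r < \<bar>t\<bar> \<Longrightarrow> D 0 t = 0" "r < \<bar>t\<bar>"
  shows "D m t = 0"
  using assms(3)
proof (induction m arbitrary: t)
  case 0
  then show ?case using assms(2) by simp
next
  case (Suc m)
  have "(D m has_real_derivative 0) (at t)"
    by (rule has_field_derivative_transform_within_open[where f="\<lambda>_. 0" and S="{t. r < \<bar>t\<bar>}"])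
      (use Suc in \<open>auto intro!: open_Collect_less continuous_intros\<close>)
  moreover have "(D m has_real_derivative D (Suc m) t) (at t)"
    using assms(1) by (simp add: deriv_tower_def)
  ultimately show ?case by (metis DERIV_unique)
qed

lemma deriv_tower_cmult: "deriv_tower D \<Longrightarrow> deriv_tower (\<lambda>m t. c * D m t)"
  unfolding deriv_tower_def by (auto intro: DERIV_cmult)

lemma deriv_tower_diff:
  "deriv_tower D \<Longrightarrow> deriv_tower E \<Longrightarrow> deriv_tower (\<lambda>m t. D m t - E m t)"
  unfolding deriv_tower_def by (auto intro: DERIV_diff)

lemma deriv_tower_affine:
  assumes "deriv_tower D"
  shows "deriv_tower (\<lambda>m t. c ^ m * D m (c * t + b))"
  unfolding deriv_tower_def
proof (intro allI)
  fix m x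
  have "((\<lambda>t. c * t + b) has_real_derivative c) (at x)"
    by (auto intro!: derivative_eq_intros)
  from DERIV_chain2[OF _ this, of "D m"] assms
  have "((\<lambda>t. D m (c * t + b)) has_real_derivative D (Suc m) (c * x + b) * c) (at x)"
    by (simp add: deriv_tower_def)
  from DERIV_cmult[OF this, of "c ^ m"]
  show "((\<lambda>t. c ^ m * D m (c * t + b)) has_real_derivative c ^ Suc m * D (Suc m) (c * x + b)) (at x)"
    by (simp add: mult_ac)
qed

text \<open>\<open>dilate a D\<close> is the derivative tower of \<open>t \<mapsto> D 0 (t / a) / a\<close>.\<close>

definition dilate :: "real \<Rightarrow> (nat \<Rightarrow> real \<Rightarrow> real) \<Rightarrow> nat \<Rightarrow> real \<Rightarrow> real" where
  "dilate a D m t = D m (t / a) / a ^ Suc m"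

lemma deriv_tower_dilate:
  assumes "deriv_tower D"
  shows "deriv_tower (dilate a D)"
proof -
  have "dilate a D = (\<lambda>m t. (1 / a) * ((1 / a) ^ m * D m ((1 / a) * t + 0)))"
    by (simp add: fun_eq_iff dilate_def power_one_over field_simps)
  show ?thesis
    unfolding \<open>dilate a D = _\<close> by (rule deriv_tower_cmult[OF deriv_tower_affine[OF assms]])
qed

lemma dilate_vanishing:
  assumes "0 < a" "\<And>t. r < \<bar>t\<bar> \<Longrightarrow> D m t = 0" "a * r < \<bar>t\<bar>"
  shows "dilate a D m t = 0"
proof -
  have "r < \<bar>t / a\<bar>"
    using assms(1,3) by (simp add: abs_divide pos_less_divide_eq mult.commute)
  then show ?thesis by (simp add: dilate_def assms(2))
qed

lemma integral_lborel_dilate: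
  fixes F :: "real \<Rightarrow> real"
  assumes "0 < a"
  shows "(\<integral>t. F (t / a) / a \<partial>lborel) = (\<integral>t. F t \<partial>lborel)"
proof -
  have "(\<integral>t. F (t / a) / a \<partial>lborel) = \<bar>a\<bar> *\<^sub>R (\<integral>x. F ((0 + a * x) / a) / a \<partial>lborel)"
    using assms by (intro lborel_integral_real_affine) simp
  also have "\<dots> = (\<integral>t. F t \<partial>lborel)" using assms by simp
  finally show ?thesis .
qed

lemma moment_dilate:
  assumes "0 < a"
  shows "(\<integral>t. t ^ j * dilate a D 0 t \<partial>lborel) = a ^ j * (\<integral>t. t ^ j * D 0 t \<partial>lborel)"
proof -
  have "(\<integral>t. t ^ j * dilate a D 0 t \<partial>lborel) = (\<integral>t. (a * (t / a)) ^ j * D 0 (t / a) / a \<partial>lborel)"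
    using assms by (simp add: dilate_def)
  also have "\<dots> = (\<integral>t. a ^ j * (t ^ j * D 0 t) \<partial>lborel)"
    using integral_lborel_dilate[OF assms, of "\<lambda>u. (a * u) ^ j * D 0 u"]
    by (simp add: power_mult_distrib mult.assoc)
  finally show ?thesis by simp
qed

lemma L1_dilate:
  assumes "0 < a"
  shows "(\<integral>t. \<bar>dilate a D 0 t\<bar> \<partial>lborel) = (\<integral>t. \<bar>D 0 t\<bar> \<partial>lborel)"
  using integral_lborel_dilate[OF assms, of "\<lambda>u. \<bar>D 0 u\<bar>"] assms
  by (simp add: dilate_def abs_divide)

lemma integrable_lborel_vanishing:
  fixes g :: "real \<Rightarrow> real"
  assumes "continuous_on UNIV g" "\<And>t. r < \<bar>t\<bar> \<Longrightarrow> g t = 0"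
  shows "integrable lborel g"
proof -
  have "integrable lborel (\<lambda>x. indicator {-r..r} x *\<^sub>R g x)"
    by (rule borel_integrable_compact) (auto intro: continuous_on_subset[OF assms(1)])
  moreover have "(\<lambda>x. indicator {-r..r} x *\<^sub>R g x) = g"
    using assms(2) by (force simp: fun_eq_iff indicator_def abs_le_iff)
  ultimately show ?thesis by simp
qed

lemma deriv_tower_bounded:
  assumes "deriv_tower D" "\<And>t. r < \<bar>t\<bar> \<Longrightarrow> D 0 t = 0"
  shows "\<exists>C\<ge>1. \<forall>m\<le>N. \<forall>t. \<bar>D m t\<bar> \<le> C"
proof -
  have "\<exists>B. \<forall>t. \<bar>D m t\<bar> \<le> B" for m
  proof -
    have "compact (D m ` {-r..r})"
      by (rule compact_continuous_image) (auto intro: continuous_on_subset[OF deriv_tower_continuous[OF assms(1)]])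
    then obtain B where B: "\<And>y. y \<in> D m ` {-r..r} \<Longrightarrow> \<bar>y\<bar> \<le> B"
      by (meson bounded_real compact_imp_bounded)
    have "\<bar>D m t\<bar> \<le> max 0 B" for t
    proof (cases "r < \<bar>t\<bar>")
      case True
      then show ?thesis using deriv_tower_vanishing[OF assms] by simp
    next
      case False
      then have "D m t \<in> D m ` {-r..r}" by (intro imageI) (simp add: abs_le_iff, linarith)
      then show ?thesis using B by fastforce
    qed
    then show ?thesis by blast
  qed
  then obtain B where B: "\<And>m t. \<bar>D m t\<bar> \<le> B m" by metis
  have "\<bar>D m t\<bar> \<le> max 1 (Max (B ` {..N}))" if "m \<le> N" for m t
    using B[of m t] that by (meson atMost_iff finite_atMost finite_imageI image_eqI Max_ge max.coboundedI2 order.trans)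
  then show ?thesis by (intro exI[of _ "max 1 (Max (B ` {..N}))"]) auto
qed

lemma integrable_deriv_tower_mult:
  assumes "deriv_tower D" "\<And>t. r < \<bar>t\<bar> \<Longrightarrow> D 0 t = 0" "continuous_on UNIV g"
  shows "integrable lborel (\<lambda>t. g t * D m t)"
  by (rule integrable_lborel_vanishing[where r=r])
    (auto intro!: continuous_intros assms(3) deriv_tower_continuous[OF assms(1)] simp: deriv_tower_vanishing[OF assms(1,2)])

section \<open>A smooth bump function\<close>

definition expinv :: "real poly \<Rightarrow> real \<Rightarrow> real" where
  "expinv p x = (if 0 < x then poly p (1 / x) * exp (- (1 / x)) else 0)"

definition expinv_deriv :: "real poly \<Rightarrow> real poly" where
  "expinv_deriv p = [:0, 0, 1:] * (p - pderiv p)"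

lemma poly_times_exp_neg_tendsto_0: "((\<lambda>t::real. poly p t * exp (- t)) \<longlongrightarrow> 0) at_top"
proof -
  have "((\<lambda>t::real. \<Sum>i\<le>degree p. coeff p i * (t ^ i / exp t)) \<longlongrightarrow> (\<Sum>i\<le>degree p. coeff p i * 0)) at_top"
    by (intro tendsto_intros tendsto_power_div_exp_0)
  moreover have "poly p t * exp (- t) = (\<Sum>i\<le>degree p. coeff p i * (t ^ i / exp t))" for t
    by (simp add: exp_minus poly_altdef sum_divide_distrib field_simps)
  ultimately show ?thesis by simp
qed

lemma has_real_derivative_expinv: "(expinv p has_real_derivative expinv (expinv_deriv p) x) (at x)"
proof (cases "0 < x")
  case True
  have "((\<lambda>x. poly p (1 / x) * exp (- (1 / x))) has_real_derivative
      poly (pderiv p) (1 / x) * (- 1 / x\<^sup>2) * exp (- (1 / x)) + poly p (1 / x) * (exp (- (1 / x)) * (1 / x\<^sup>2))) (at x)"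
    using True by (auto intro!: derivative_eq_intros DERIV_chain2[OF poly_DERIV] simp: power2_eq_square field_simps)
  moreover have "poly (pderiv p) (1 / x) * (- 1 / x\<^sup>2) * exp (- (1 / x)) + poly p (1 / x) * (exp (- (1 / x)) * (1 / x\<^sup>2))
      = expinv (expinv_deriv p) x"
    using True by (simp add: expinv_def expinv_deriv_def field_simps power2_eq_square)
  ultimately show ?thesis
    by (rule_tac has_field_derivative_transform_within_open[where S="{0<..}"]) (auto simp: expinv_def True)
next
  case False
  show ?thesis
  proof (cases "x < 0")
    case True
    then show ?thesis
      by (rule_tac has_field_derivative_transform_within_open[where f="\<lambda>_. 0" and S="{..<0}"]) (auto simp: expinv_def)
  next
    case False
    with \<open>\<not> 0 < x\<close> have x: "x = 0" by simp
    have "((\<lambda>y. (expinv p y - expinv p 0) / (y - 0)) \<longlongrightarrow> 0) (at (0::real))"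
    proof (rule filterlim_split_at)
      show "((\<lambda>y. (expinv p y - expinv p 0) / (y - 0)) \<longlongrightarrow> 0) (at_left (0::real))"
        by (rule tendsto_eventually) (auto simp: expinv_def eventually_at_left_field intro!: exI[of _ "-1"])
      \<comment> \<open>at the right of 0 the difference quotient is \<open>t p(t) e\<^sup>-\<^sup>t\<close> with \<open>t = 1/y\<close>\<close>
      have "((\<lambda>t. (expinv p (inverse t) - expinv p 0) / (inverse t - 0)) \<longlongrightarrow> 0) at_top"
        by (rule Lim_transform_eventually[OF poly_times_exp_neg_tendsto_0[of "pCons 0 p"]])
          (auto simp: expinv_def eventually_at_top_linorder field_simps intro!: exI[of _ 1])
      then show "((\<lambda>y. (expinv p y - expinv p 0) / (y - 0)) \<longlongrightarrow> 0) (at_right (0::real))"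
        by (simp add: filterlim_at_right_to_top)
    qed
    then show ?thesis unfolding x by (simp add: has_field_derivative_iff expinv_def)
  qed
qed

lemma deriv_tower_expinv: "deriv_tower (\<lambda>m. expinv ((expinv_deriv ^^ m) p))"
  by (simp add: deriv_tower_def has_real_derivative_expinv)

fun times_differentiable :: "nat \<Rightarrow> (real \<Rightarrow> real) \<Rightarrow> bool" where
  "times_differentiable 0 f = True"
| "times_differentiable (Suc k) f \<longleftrightarrow> (\<forall>x. f differentiable (at x)) \<and> times_differentiable k (deriv f)"

lemma deriv_eqI_everywhere:
  assumes "\<And>x. (f has_real_derivative g x) (at x)"
  shows "deriv f = g"
  using assms by (auto intro!: ext DERIV_imp_deriv)

lemma deriv_tower_times_differentiable:
  "deriv_tower D \<Longrightarrow> times_differentiable k (D 0)"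
proof (induction k arbitrary: D)
  case (Suc k)
  then have D0: "\<And>x. (D 0 has_real_derivative D 1 x) (at x)" and "deriv_tower (\<lambda>m. D (Suc m))"
    by (simp_all add: deriv_tower_def)
  then have "times_differentiable k (D 1)" using Suc.IH by fastforce
  then show ?case using D0 deriv_eqI_everywhere[OF D0] by (auto simp: real_differentiable_def)
qed simp

lemma times_differentiable_SucD: "times_differentiable (Suc k) f \<Longrightarrow> times_differentiable k f"
  by (induction k arbitrary: f) auto

lemma times_differentiable_funpow_deriv:
  "times_differentiable (k + m) f \<Longrightarrow> times_differentiable k ((deriv ^^ m) f)"
  by (induction m arbitrary: f) (simp_all add: funpow_Suc_right del: funpow.simps)

lemma deriv_tower_funpow_deriv:
  assumes "\<And>k. times_differentiable k f"
  shows "deriv_tower (\<lambda>m. (deriv ^^ m) f)"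
  unfolding deriv_tower_def
proof (intro allI)
  fix m x
  have "times_differentiable (Suc 0) ((deriv ^^ m) f)"
    using assms times_differentiable_funpow_deriv[of "Suc 0" m f] by simp
  then show "((deriv ^^ m) f has_real_derivative (deriv ^^ Suc m) f x) (at x)"
    by (simp add: DERIV_deriv_iff_real_differentiable)
qed

lemma times_differentiable_add:
  "times_differentiable k f \<Longrightarrow> times_differentiable k g \<Longrightarrow> times_differentiable k (\<lambda>x. f x + g x)"
proof (induction k arbitrary: f g)
  case (Suc k)
  have "deriv (\<lambda>x. f x + g x) = (\<lambda>x. deriv f x + deriv g x)"
    using Suc.prems by (intro deriv_eqI_everywhere DERIV_add) (auto simp: DERIV_deriv_iff_real_differentiable)
  then show ?case using Suc by auto
qed simp

lemma times_differentiable_mult: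
  "times_differentiable k f \<Longrightarrow> times_differentiable k g \<Longrightarrow> times_differentiable k (\<lambda>x. f x * g x)"
proof (induction k arbitrary: f g)
  case (Suc k)
  have "deriv (\<lambda>x. f x * g x) = (\<lambda>x. deriv f x * g x + f x * deriv g x)"
  proof (rule deriv_eqI_everywhere)
    fix x
    have "(f has_real_derivative deriv f x) (at x)" "(g has_real_derivative deriv g x) (at x)"
      using Suc.prems by (auto simp: DERIV_deriv_iff_real_differentiable)
    from DERIV_mult[OF this]
    show "((\<lambda>x. f x * g x) has_real_derivative deriv f x * g x + f x * deriv g x) (at x)"
      by (simp add: mult.commute)
  qed
  moreover have "times_differentiable k f" "times_differentiable k g"
    using Suc.prems times_differentiable_SucD by blast+
  ultimately show ?case using Suc by (auto intro!: Suc.IH times_differentiable_add)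
qed simp

definition bump :: "real \<Rightarrow> real" where
  "bump t = expinv 1 (1 + t) * expinv 1 (1 - t)"

lemma deriv_tower_bump: "deriv_tower (\<lambda>m. (deriv ^^ m) bump)"
proof (rule deriv_tower_funpow_deriv)
  fix k
  have "deriv_tower (\<lambda>m t. c ^ m * expinv ((expinv_deriv ^^ m) 1) (c * t + 1))" for c
    by (rule deriv_tower_affine[OF deriv_tower_expinv])
  then have "times_differentiable k (\<lambda>t. expinv 1 (c * t + 1))" for c
    using deriv_tower_times_differentiable by fastforce
  from times_differentiable_mult[OF this[of 1] this[of "-1"]]
  show "times_differentiable k bump" by (simp add: bump_def[abs_def] add.commute)
qed

lemma bump_vanishing: "1 < \<bar>t\<bar> \<Longrightarrow> bump t = 0"
  by (auto simp: bump_def expinv_def)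

lemma bump_nonneg: "0 \<le> bump t"
  by (simp add: bump_def expinv_def)

lemma bump_even: "bump (- t) = bump t"
  by (simp add: bump_def)

lemma bump_integral_pos: "0 < (\<integral>t. bump t \<partial>lborel)"
proof -
  have cont: "continuous_on UNIV bump"
    using deriv_tower_continuous[OF deriv_tower_bump, of 0] by simp
  have pos: "0 < bump 0" by (simp add: bump_def expinv_def)
  then have "bump 0 / 2 < bump 0" by simp
  moreover have "(bump \<longlongrightarrow> bump 0) (nhds 0)"
    using cont by (simp add: continuous_on_eq_continuous_at isCont_def tendsto_at_iff_tendsto_nhds)
  ultimately have "\<forall>\<^sub>F t in nhds 0. bump 0 / 2 < bump t"
    by (rule order_tendstoD(1)[rotated])
  then obtain d where d: "0 < d" "\<And>t. \<bar>t\<bar> < d \<Longrightarrow> bump 0 / 2 < bump t"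
    by (auto simp: eventually_nhds_metric dist_real_def)
  have "(\<integral>t. bump 0 / 2 * indicator {-d/2..d/2} t \<partial>lborel) \<le> (\<integral>t. bump t \<partial>lborel)"
  proof (rule integral_mono)
    show "integrable lborel bump"
      using cont bump_vanishing by (rule integrable_lborel_vanishing)
    show "bump 0 / 2 * indicator {-d/2..d/2} t \<le> bump t" for t
    proof (cases "t \<in> {-d/2..d/2}")
      case True
      then have "\<bar>t\<bar> < d" using d(1) by auto
      then show ?thesis using True d(2) by fastforce
    qed (simp add: bump_nonneg)
  qed (use d in auto)
  moreover have "0 < bump 0 / 2 * d"
    using d pos by simp
  ultimately show ?thesis using d by simp
qed

section \<open>Killing moments\<close>

primrec moment_killer :: "real \<Rightarrow> nat \<Rightarrow> nat \<Rightarrow> real \<Rightarrow> real" where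
  "moment_killer s 0 = (\<lambda>m. (deriv ^^ m) bump)"
| "moment_killer s (Suc p) =
    (\<lambda>m t. (s ^ Suc p * moment_killer s p m t - dilate s (moment_killer s p) m t) / (s ^ Suc p - 1))"

lemma deriv_tower_moment_killer: "deriv_tower (moment_killer s p)"
proof (induction p)
  case 0
  then show ?case using deriv_tower_bump by simp
next
  case (Suc p)
  have "moment_killer s (Suc p) = (\<lambda>m t. inverse (s ^ Suc p - 1) *
      (s ^ Suc p * moment_killer s p m t - dilate s (moment_killer s p) m t))"
    by (simp add: fun_eq_iff divide_inverse mult.commute)
  then show ?case
    by (simp add: deriv_tower_cmult deriv_tower_diff deriv_tower_dilate Suc)
qed

context
  fixes s :: real
  assumes s_pos: "0 < s" and s_less_1: "s < 1"
begin

lemma moment_killer_vanishing: "1 < \<bar>t\<bar> \<Longrightarrow> moment_killer s p m t = 0"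
proof (induction p arbitrary: m t)
  case 0
  have "(deriv ^^ m) bump t = 0"
    by (rule deriv_tower_vanishing[OF deriv_tower_bump, where r=1]) (use 0 bump_vanishing in auto)
  then show ?case by simp
next
  case (Suc p)
  have "dilate s (moment_killer s p) m t = 0"
    using s_less_1 Suc by (intro dilate_vanishing[OF s_pos, where r=1]) auto
  then show ?case using Suc by simp
qed

lemma moment_killer_even: "moment_killer s p 0 (- t) = moment_killer s p 0 t"
  by (induction p arbitrary: t) (simp_all add: bump_even dilate_def)

lemma integrable_moment_killer_mult:
  "continuous_on UNIV g \<Longrightarrow> integrable lborel (\<lambda>t. g t * moment_killer s p m t)"
  using deriv_tower_moment_killer moment_killer_vanishing by (rule integrable_deriv_tower_mult)

lemma integrable_dilate_moment_killer_mult: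
  "continuous_on UNIV g \<Longrightarrow> integrable lborel (\<lambda>t. g t * dilate s (moment_killer s p) m t)"
  by (rule integrable_deriv_tower_mult[OF deriv_tower_dilate[OF deriv_tower_moment_killer], where r=1])
    (use dilate_vanishing[OF s_pos _, of 1] moment_killer_vanishing s_less_1 in auto)

lemma moment_moment_killer:
  "(\<integral>t. t ^ j * moment_killer s p 0 t \<partial>lborel)
    = (\<Prod>k=1..p. (s ^ k - s ^ j) / (s ^ k - 1)) * (\<integral>t. t ^ j * bump t \<partial>lborel)"
proof (induction p)
  case (Suc p)
  define q where "q = s ^ Suc p"
  have "(\<integral>t. t ^ j * moment_killer s (Suc p) 0 t \<partial>lborel)
      = (\<integral>t. q * (t ^ j * moment_killer s p 0 t) - t ^ j * dilate s (moment_killer s p) 0 t \<partial>lborel) / (q - 1)"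
    by (simp add: q_def right_diff_distrib mult_ac)
  also have "\<dots> = (q - s ^ j) / (q - 1) * (\<integral>t. t ^ j * moment_killer s p 0 t \<partial>lborel)"
  proof -
    have "integrable lborel (\<lambda>t. t ^ j * moment_killer s p 0 t)"
      "integrable lborel (\<lambda>t. t ^ j * dilate s (moment_killer s p) 0 t)"
      by (intro integrable_moment_killer_mult integrable_dilate_moment_killer_mult continuous_intros)+
    then show ?thesis
      by (simp add: Bochner_Integration.integral_diff moment_dilate[OF s_pos] left_diff_distrib)
  qed
  finally show ?case by (simp add: Suc q_def mult_ac)
qed simp

lemma integral_moment_killer: "(\<integral>t. moment_killer s p 0 t \<partial>lborel) = (\<integral>t. bump t \<partial>lborel)"
proof -
  have "s ^ k \<noteq> 1" if "1 \<le> k" for k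
    using that s_pos s_less_1 power_less_one_iff[of s k] by simp
  then have "(\<Prod>k=1..p. (s ^ k - s ^ 0) / (s ^ k - 1)) = 1"
    by (intro prod.neutral) simp
  then show ?thesis
    using moment_moment_killer[of 0 p] by simp
qed

lemma moment_killer_moment_eq_0:
  assumes "1 \<le> j" "j \<le> p"
  shows "(\<integral>t. t ^ j * moment_killer s p 0 t \<partial>lborel) = 0"
proof -
  have "(\<Prod>k=1..p. (s ^ k - s ^ j) / (s ^ k - 1)) = 0"
    using assms by (intro prod_zero) auto
  then show ?thesis
    using moment_moment_killer[of j p] by simp
qed

lemma integrable_moment_killer: "integrable lborel (moment_killer s p m)"
  using integrable_moment_killer_mult[of "\<lambda>_. 1"] by simp

lemma L1_moment_killer:
  "(\<integral>t. \<bar>moment_killer s p 0 t\<bar> \<partial>lborel) \<le> ((1 + s) / (1 - s)) ^ p * (\<integral>t. bump t \<partial>lborel)"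
proof (induction p)
  case 0
  then show ?case by (simp add: bump_nonneg)
next
  case (Suc p)
  define q where "q = s ^ Suc p"
  have q: "0 < q" "q \<le> s"
    using s_pos s_less_1 by (simp_all add: q_def power_le_one mult_left_le)
  let ?G = "moment_killer s p 0"
  have int: "integrable lborel (\<lambda>t. \<bar>?G t\<bar>)" "integrable lborel (\<lambda>t. \<bar>dilate s (moment_killer s p) 0 t\<bar>)"
    using integrable_moment_killer integrable_dilate_moment_killer_mult[of "\<lambda>_. 1"]
    by (auto intro: integrable_abs)
  have "(\<integral>t. \<bar>moment_killer s (Suc p) 0 t\<bar> \<partial>lborel)
      \<le> (\<integral>t. (q * \<bar>?G t\<bar> + \<bar>dilate s (moment_killer s p) 0 t\<bar>) / (1 - q) \<partial>lborel)"
  proof (rule integral_mono)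
    show "integrable lborel (\<lambda>t. \<bar>moment_killer s (Suc p) 0 t\<bar>)"
      by (rule integrable_abs[OF integrable_moment_killer])
    show "integrable lborel (\<lambda>t. (q * \<bar>?G t\<bar> + \<bar>dilate s (moment_killer s p) 0 t\<bar>) / (1 - q))"
      using int by auto
    have "\<bar>q * ?G t - dilate s (moment_killer s p) 0 t\<bar> \<le> q * \<bar>?G t\<bar> + \<bar>dilate s (moment_killer s p) 0 t\<bar>" for t
      using q by (simp add: abs_mult order.trans[OF abs_triangle_ineq4])
    then show "\<bar>moment_killer s (Suc p) 0 t\<bar> \<le> (q * \<bar>?G t\<bar> + \<bar>dilate s (moment_killer s p) 0 t\<bar>) / (1 - q)" for t
      using q s_less_1 by (simp add: q_def abs_divide abs_minus_commute divide_right_mono)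
  qed
  also have "\<dots> = (1 + q) / (1 - q) * (\<integral>t. \<bar>?G t\<bar> \<partial>lborel)"
    using int by (simp add: L1_dilate[OF s_pos] field_simps)
  also have "\<dots> \<le> (1 + s) / (1 - s) * (((1 + s) / (1 - s)) ^ p * (\<integral>t. bump t \<partial>lborel))"
    using q s_less_1 Suc by (intro mult_mono frac_le) auto
  finally show ?case by simp
qed

end

definition mollifier_profile :: "real \<Rightarrow> nat \<Rightarrow> real \<Rightarrow> nat \<Rightarrow> real \<Rightarrow> real" where
  "mollifier_profile s n a m t = dilate a (moment_killer s n) m t / (\<integral>t. bump t \<partial>lborel)"

lemma deriv_tower_mollifier_profile: "deriv_tower (mollifier_profile s n a)"
proof -
  have "mollifier_profile s n a = (\<lambda>m t. inverse (\<integral>t. bump t \<partial>lborel) * dilate a (moment_killer s n) m t)"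
    by (simp add: fun_eq_iff mollifier_profile_def divide_inverse mult.commute)
  then show ?thesis
    by (simp add: deriv_tower_cmult deriv_tower_dilate deriv_tower_moment_killer)
qed

lemma mollifier_profile_rescale:
  "mollifier_profile s n a m t = mollifier_profile s n 1 m (t / a) / a ^ Suc m"
  by (simp add: mollifier_profile_def dilate_def)

context
  fixes s a :: real and n :: nat
  assumes s_pos: "0 < s" and s_less_1: "s < 1" and a_pos: "0 < a"
begin

lemma mollifier_profile_vanishing:
  assumes "a < \<bar>t\<bar>"
  shows "mollifier_profile s n a m t = 0"
proof -
  have "dilate a (moment_killer s n) m t = 0"
    by (rule dilate_vanishing[OF a_pos, where r=1]) (use assms moment_killer_vanishing[OF s_pos s_less_1] in auto)
  then show ?thesis by (simp add: mollifier_profile_def)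
qed

lemma mollifier_profile_even: "mollifier_profile s n a 0 (- t) = mollifier_profile s n a 0 t"
  using moment_killer_even[OF s_pos s_less_1, of n "t / a"] by (simp add: mollifier_profile_def dilate_def)

lemma integrable_mollifier_profile_mult:
  "continuous_on UNIV g \<Longrightarrow> integrable lborel (\<lambda>t. g t * mollifier_profile s n a m t)"
  using deriv_tower_mollifier_profile mollifier_profile_vanishing by (rule integrable_deriv_tower_mult)

lemma moment_mollifier_profile:
  "(\<integral>t. t ^ j * mollifier_profile s n a 0 t \<partial>lborel)
    = a ^ j * (\<integral>t. t ^ j * moment_killer s n 0 t \<partial>lborel) / (\<integral>t. bump t \<partial>lborel)"
  unfolding mollifier_profile_def by (simp add: moment_dilate[OF a_pos, symmetric])

lemma integral_mollifier_profile: "(\<integral>t. mollifier_profile s n a 0 t \<partial>lborel) = 1"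
  using moment_mollifier_profile[of 0] bump_integral_pos
  by (simp add: integral_moment_killer[OF s_pos s_less_1])

lemma moment_mollifier_profile_eq_0:
  "1 \<le> j \<Longrightarrow> j \<le> n \<Longrightarrow> (\<integral>t. t ^ j * mollifier_profile s n a 0 t \<partial>lborel) = 0"
  by (simp add: moment_mollifier_profile moment_killer_moment_eq_0[OF s_pos s_less_1])

lemma L1_mollifier_profile:
  "(\<integral>t. \<bar>mollifier_profile s n a 0 t\<bar> \<partial>lborel) \<le> ((1 + s) / (1 - s)) ^ n"
proof -
  have "(\<integral>t. \<bar>mollifier_profile s n a 0 t\<bar> \<partial>lborel)
      = (\<integral>t. \<bar>moment_killer s n 0 t\<bar> \<partial>lborel) / (\<integral>t. bump t \<partial>lborel)"
    using bump_integral_pos L1_dilate[OF a_pos, of "moment_killer s n"]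
    by (simp add: mollifier_profile_def)
  also have "\<dots> \<le> ((1 + s) / (1 - s)) ^ n"
    using L1_moment_killer[OF s_pos s_less_1, of n] bump_integral_pos by (simp add: divide_le_eq)
  finally show ?thesis .
qed

end

section \<open>Tensor products of derivative towers\<close>

definition tensor_tower :: "(nat \<Rightarrow> real \<Rightarrow> real) \<Rightarrow> ('n::finite \<Rightarrow> nat) \<Rightarrow> real^'n \<Rightarrow> real" where
  "tensor_tower D k x = (\<Prod>i\<in>UNIV. D (k i) (x $ i))"

lemma tensor_tower_remove:
  "tensor_tower D k x = D (k i) (x $ i) * (\<Prod>j\<in>UNIV - {i}. D (k j) (x $ j))"
  unfolding tensor_tower_def by (rule prod.remove) auto

lemma has_real_derivative_tensor_tower_axis:
  assumes "deriv_tower D"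
  shows "((\<lambda>t. tensor_tower D k (x + t *\<^sub>R axis i 1)) has_real_derivative tensor_tower D (k(i := Suc (k i))) x) (at 0)"
proof -
  define c where "c = (\<Prod>j\<in>UNIV - {i}. D (k j) (x $ j))"
  have "tensor_tower D k (x + t *\<^sub>R axis i 1) = D (k i) (1 * t + x $ i) * c" for t
    unfolding tensor_tower_remove[of D k _ i] c_def
    by (auto simp: axis_def add.commute intro!: prod.cong)
  moreover have "tensor_tower D (k(i := Suc (k i))) x = 1 ^ Suc (k i) * D (Suc (k i)) (1 * 0 + x $ i) * c"
    unfolding tensor_tower_remove[of D _ x i] c_def by (auto intro!: prod.cong)
  moreover have "((\<lambda>t. 1 ^ k i * D (k i) (1 * t + x $ i)) has_real_derivative 1 ^ Suc (k i) * D (Suc (k i)) (1 * 0 + x $ i)) (at 0)"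
    using deriv_tower_affine[OF assms, of 1 "x $ i"] by (simp only: deriv_tower_def)
  ultimately show ?thesis by (auto intro: DERIV_mult[OF _ DERIV_const, simplified])
qed

lemma pdiff_tensor_tower:
  assumes "deriv_tower D"
  shows "pdiff i (\<lambda>x. complex_of_real (tensor_tower D k x)) = (\<lambda>x. complex_of_real (tensor_tower D (k(i := Suc (k i))) x))"
  unfolding pdiff_def
  by (intro ext vector_derivative_at has_vector_derivative_of_real has_real_derivative_tensor_tower_axis assms)

lemma iter_pd_tensor_tower:
  assumes "deriv_tower D"
  shows "iter_pd is (\<lambda>x. complex_of_real (tensor_tower D (\<lambda>_. 0) x)) = (\<lambda>x. complex_of_real (tensor_tower D (count_list is) x))"
proof (induction "is")
  case (Cons i "is")
  have "count_list (i # is) = (count_list is)(i := Suc (count_list is i))"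
    by (auto simp: fun_eq_iff)
  then show ?case
    by (simp only: iter_pd.simps Cons.IH pdiff_tensor_tower[OF assms])
qed simp

lemma smooth_fun_tensor_tower:
  assumes "deriv_tower D"
  shows "smooth_fun (\<lambda>x. complex_of_real (tensor_tower D (\<lambda>_. 0) x))"
  unfolding smooth_fun_def iter_pd_tensor_tower[OF assms]
proof (intro allI conjI)
  show "continuous_on UNIV (\<lambda>x. complex_of_real (tensor_tower D (count_list is) x))" for "is"
    unfolding tensor_tower_def
    by (intro continuous_intros continuous_on_compose2[OF deriv_tower_continuous[OF assms]]) auto
  show "(\<lambda>t. complex_of_real (tensor_tower D (count_list is) (x + t *\<^sub>R axis i 1))) differentiable at 0" for "is" i x
    by (rule differentiableI_vector[OF has_vector_derivative_of_real[OF has_real_derivative_tensor_tower_axis[OF assms]]])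
qed

lemma ex_count_list_eq: "\<exists>is. count_list is = (\<alpha> :: 'a::finite \<Rightarrow> nat)"
proof -
  obtain xs :: "'a list" where xs: "set xs = UNIV" "distinct xs"
    using finite_distinct_list[of "UNIV :: 'a set"] by auto
  have "count_list (concat (map (\<lambda>j. replicate (\<alpha> j) j) xs)) i = (if i \<in> set xs then \<alpha> i else 0)" for i
    using xs(2) by (induction xs) (auto simp: count_list_eq_length_filter filter_replicate)
  then show ?thesis using xs(1) by (intro exI[of _ "concat (map (\<lambda>j. replicate (\<alpha> j) j) xs)"]) auto
qed

lemma mpd_tensor_tower:
  assumes "deriv_tower D"
  shows "mpd \<alpha> (\<lambda>x. complex_of_real (tensor_tower D (\<lambda>_. 0) x)) = (\<lambda>x. complex_of_real (tensor_tower D \<alpha> x))"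
proof -
  have "\<forall>i. count_list (SOME is. \<forall>i. count_list is i = \<alpha> i) i = \<alpha> i"
    using someI_ex[of "\<lambda>is. \<forall>i. count_list is i = \<alpha> i"] ex_count_list_eq[of \<alpha>] by metis
  then show ?thesis
    unfolding mpd_def iter_pd_tensor_tower[OF assms] by (simp add: fun_eq_iff[symmetric])
qed

lemma norm_le_if_tensor_tower_nonzero:
  fixes x :: "real^'n::finite"
  assumes "\<And>m t. r < \<bar>t\<bar> \<Longrightarrow> D m t = 0" "tensor_tower D k x \<noteq> 0"
  shows "norm x \<le> real CARD('n) * r"
proof -
  have "\<bar>x $ i\<bar> \<le> r" for i
    using assms prod_zero[of UNIV "\<lambda>i. D (k i) (x $ i)"] unfolding tensor_tower_def by (meson finite not_less UNIV_I)
  then have "(\<Sum>i\<in>UNIV. \<bar>x $ i\<bar>) \<le> real CARD('n) * r"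
    using sum_bounded_above[of UNIV "\<lambda>i. \<bar>x $ i\<bar>" r] by simp
  then show ?thesis using norm_le_l1_cart[of x] by simp
qed

lemma abs_tensor_tower_le:
  fixes \<alpha> :: "'n::finite \<Rightarrow> nat"
  assumes "0 < a" "\<And>m t. m \<le> mabs \<alpha> \<Longrightarrow> \<bar>D m t\<bar> \<le> C / a ^ Suc m"
  shows "\<bar>tensor_tower D \<alpha> x\<bar> \<le> C ^ CARD('n) / a ^ (mabs \<alpha> + CARD('n))"
proof -
  have "\<bar>tensor_tower D \<alpha> x\<bar> = (\<Prod>i\<in>UNIV. \<bar>D (\<alpha> i) (x $ i)\<bar>)"
    by (simp add: tensor_tower_def abs_prod)
  also have "\<dots> \<le> (\<Prod>i\<in>UNIV. C / a ^ Suc (\<alpha> i))"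
    by (intro prod_mono conjI assms(2)) (auto simp: mabs_def intro: member_le_sum)
  also have "\<dots> = C ^ CARD('n) / (\<Prod>i\<in>UNIV. a ^ Suc (\<alpha> i))"
    by (simp add: prod_dividef del: power_Suc)
  also have "(\<Prod>i\<in>UNIV. a ^ Suc (\<alpha> i)) = a ^ (mabs \<alpha> + CARD('n))"
    by (simp only: power_sum[symmetric] sum_Suc mabs_def)
  finally show ?thesis .
qed

section \<open>Integrals of tensor products and support radii\<close>

lemma Basis_vec_axis: "(Basis :: (real^'n::finite) set) = range (\<lambda>j. axis j 1)"
  by (auto simp: Basis_vec_def)

lemma sum_Basis_scaleR_nth:
  fixes g :: "real^'n::finite \<Rightarrow> real"
  shows "(\<Sum>b\<in>Basis. g b *\<^sub>R b) $ i = g (axis i 1)"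
proof -
  have "(\<Sum>b\<in>Basis. g b *\<^sub>R b) $ i = (\<Sum>j\<in>UNIV. g (axis j 1) * (axis j 1 $ i :: real))"
    unfolding Basis_vec_axis sum_component by (subst sum.reindex) (auto simp: inj_on_def axis_eq_axis)
  also have "\<dots> = g (axis i 1)"
    by (simp add: axis_def if_distrib cong: if_cong)
  finally show ?thesis .
qed

lemma
  fixes f :: "'n::finite \<Rightarrow> real \<Rightarrow> real"
  assumes "\<And>i. integrable lborel (f i)"
  shows integrable_lborel_prod_nth: "integrable lborel (\<lambda>x::real^'n. \<Prod>i\<in>UNIV. f i (x $ i))"
    and integral_lborel_prod_nth:
      "(\<integral>x. (\<Prod>i\<in>UNIV. f i ((x::real^'n) $ i)) \<partial>lborel) = (\<Prod>i\<in>UNIV. \<integral>t. f i t \<partial>lborel)"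
proof -
  interpret P: product_sigma_finite "\<lambda>_::real^'n. lborel::real measure"
    by (simp add: product_sigma_finite_def lborel.sigma_finite_measure_axioms)
  define T where "T = (\<lambda>g::real^'n \<Rightarrow> real. \<Sum>b\<in>Basis. g b *\<^sub>R b)"
  have lborel_eq: "(lborel :: (real^'n) measure) = distr (\<Pi>\<^sub>M b\<in>Basis. lborel) borel T"
    unfolding T_def by (rule lborel_eq)
  have T: "T \<in> measurable (\<Pi>\<^sub>M b\<in>(Basis::(real^'n) set). lborel) borel"
    unfolding T_def by measurable
  have prod_T: "(\<Prod>i\<in>UNIV. f i (T g $ i)) = (\<Prod>b\<in>Basis. f (axis_index b) (g b))" for g
  proof -
    have "(\<Prod>b\<in>Basis. f (axis_index b) (g b)) = (\<Prod>i\<in>UNIV. f i (g (axis i 1)))"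
      unfolding Basis_vec_axis by (subst prod.reindex) (auto simp: inj_on_def axis_eq_axis)
    then show ?thesis unfolding T_def sum_Basis_scaleR_nth by simp
  qed
  have int: "integrable (\<Pi>\<^sub>M b\<in>(Basis::(real^'n) set). lborel) (\<lambda>g. \<Prod>b\<in>Basis. f (axis_index b) (g b))"
    by (rule P.product_integrable_prod) (auto simp: assms)
  have "f i \<in> borel_measurable borel" for i
    using assms[of i] by auto
  then have meas: "(\<lambda>x::real^'n. \<Prod>i\<in>UNIV. f i (x $ i)) \<in> borel_measurable borel"
    by measurable
  show "integrable lborel (\<lambda>x::real^'n. \<Prod>i\<in>UNIV. f i (x $ i))"
    unfolding lborel_eq using int meas T by (subst integrable_distr_eq) (auto simp: prod_T)
  have "(\<integral>x. (\<Prod>i\<in>UNIV. f i ((x::real^'n) $ i)) \<partial>lborel)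
      = (\<integral>g. (\<Prod>b\<in>Basis. f (axis_index b) (g b)) \<partial>(\<Pi>\<^sub>M b\<in>(Basis::(real^'n) set). lborel))"
    unfolding lborel_eq using meas T by (subst integral_distr) (auto simp: prod_T)
  also have "\<dots> = (\<Prod>b\<in>(Basis::(real^'n) set). \<integral>t. f (axis_index b) t \<partial>lborel)"
    by (rule P.product_integral_prod) (auto simp: assms)
  also have "\<dots> = (\<Prod>i\<in>UNIV. \<integral>t. f i t \<partial>lborel)"
    unfolding Basis_vec_axis by (subst prod.reindex) (auto simp: inj_on_def axis_eq_axis)
  finally show "(\<integral>x. (\<Prod>i\<in>UNIV. f i ((x::real^'n) $ i)) \<partial>lborel) = (\<Prod>i\<in>UNIV. \<integral>t. f i t \<partial>lborel)" .
qed

lemma integral_of_real_prod_nth: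
  fixes f :: "'n::finite \<Rightarrow> real \<Rightarrow> real"
  assumes "\<And>i. integrable lborel (f i)"
  shows "integral UNIV (\<lambda>x::real^'n. complex_of_real (\<Prod>i\<in>UNIV. f i (x $ i)))
    = complex_of_real (\<Prod>i\<in>UNIV. \<integral>t. f i t \<partial>lborel)"
proof -
  have "integral UNIV (\<lambda>x::real^'n. complex_of_real (\<Prod>i\<in>UNIV. f i (x $ i)))
      = (\<integral>x. complex_of_real (\<Prod>i\<in>UNIV. f i ((x::real^'n) $ i)) \<partial>lborel)"
    by (rule integral_lborel[OF integrable_of_real[OF integrable_lborel_prod_nth[OF assms]]])
  also have "\<dots> = complex_of_real (\<Prod>i\<in>UNIV. \<integral>t. f i t \<partial>lborel)"
    by (simp only: integral_complex_of_real integral_lborel_prod_nth[OF assms])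
  finally show ?thesis .
qed

lemma Rad_le:
  assumes "\<exists>x. f x \<noteq> 0" "\<And>x. f x \<noteq> 0 \<Longrightarrow> norm x \<le> R"
  shows "Rad f \<le> R"
  unfolding Rad_def using assms by (auto intro!: cSup_least)

lemma norm_le_Rad:
  assumes "bounded {x. f x \<noteq> 0}" "f x \<noteq> 0"
  shows "norm x \<le> Rad f"
proof -
  obtain B where "\<And>y. f y \<noteq> 0 \<Longrightarrow> norm y \<le> B"
    using assms(1) unfolding bounded_iff by auto
  then have "bdd_above {norm x | x. f x \<noteq> 0}"
    by (auto intro!: bdd_aboveI[of _ B])
  then show ?thesis
    unfolding Rad_def using assms(2) by (auto intro!: cSup_upper)
qed

lemma Rad_pos:
  fixes f :: "real^'n::finite \<Rightarrow> complex"
  assumes "bounded {x. f x \<noteq> 0}" "integral UNIV f \<noteq> 0"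
  shows "0 < Rad f"
proof (rule ccontr)
  assume "\<not> 0 < Rad f"
  then have "f x = 0" if "x \<noteq> 0" for x
    using norm_le_Rad[OF assms(1), of x] that by (metis norm_le_zero_iff order.trans not_less)
  then have "integral UNIV f = integral UNIV (\<lambda>x. 0::complex)"
    using integral_spike[OF negligible_sing[of 0], of UNIV "\<lambda>x. 0::complex" f] by auto
  then show False using assms(2) by simp
qed

section \<open>The sets \<open>D\<^sub>n\<close>\<close>

definition mollifier :: "real \<Rightarrow> nat \<Rightarrow> real \<Rightarrow> real^'n::finite \<Rightarrow> complex" where
  "mollifier s n a x = complex_of_real (tensor_tower (mollifier_profile s n a) (\<lambda>_. 0) x)"

context
  fixes s a :: real and n :: nat
  assumes s_pos: "0 < s" and s_less_1: "s < 1" and a_pos: "0 < a"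
begin

lemma mollifier_minus: "mollifier s n a (- x) = mollifier s n a x"
  by (simp add: mollifier_def tensor_tower_def mollifier_profile_even[OF s_pos s_less_1 a_pos])

lemma norm_le_if_mollifier_nonzero:
  "mollifier s n a x \<noteq> 0 \<Longrightarrow> norm x \<le> real CARD('n) * a" for x :: "real^'n::finite"
  unfolding mollifier_def
  by (rule norm_le_if_tensor_tower_nonzero) (auto intro: mollifier_profile_vanishing[OF s_pos s_less_1 a_pos])

lemma bounded_support_mollifier: "bounded {x :: real^'n::finite. mollifier s n a x \<noteq> 0}"
  unfolding bounded_iff using norm_le_if_mollifier_nonzero by blast

lemma mollifier_in_D0: "(mollifier s n a :: real^'n::finite \<Rightarrow> complex) \<in> D0"
proof -
  have "smooth_fun (mollifier s n a :: real^'n \<Rightarrow> complex)"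
    unfolding mollifier_def[abs_def] by (rule smooth_fun_tensor_tower[OF deriv_tower_mollifier_profile])
  then show ?thesis
    using bounded_support_mollifier by (simp add: D0_def compact_closure)
qed

lemma integral_mollifier: "integral UNIV (mollifier s n a :: real^'n::finite \<Rightarrow> complex) = 1"
  using integral_of_real_prod_nth[of "\<lambda>_. mollifier_profile s n a 0"]
    integrable_mollifier_profile_mult[OF s_pos s_less_1 a_pos, of "\<lambda>_. 1"]
  by (simp add: mollifier_def[abs_def] tensor_tower_def integral_mollifier_profile[OF s_pos s_less_1 a_pos])

lemma moment_mollifier_eq_0:
  fixes \<alpha> :: "'n::finite \<Rightarrow> nat"
  assumes "1 \<le> mabs \<alpha>" "mabs \<alpha> \<le> n"
  shows "integral UNIV (\<lambda>x. complex_of_real (mono_pow x \<alpha>) * mollifier s n a x) = 0"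
proof -
  obtain i where i: "\<alpha> i \<noteq> 0"
    using assms(1) unfolding mabs_def by (metis not_one_le_zero sum.neutral)
  have "\<alpha> i \<le> n"
    using assms(2) unfolding mabs_def by (meson finite member_le_sum UNIV_I le_trans zero_le)
  then have moment_i: "(\<integral>t. t ^ \<alpha> i * mollifier_profile s n a 0 t \<partial>lborel) = 0"
    using i moment_mollifier_profile_eq_0[OF s_pos s_less_1 a_pos] by simp
  have "(\<lambda>x. complex_of_real (mono_pow x \<alpha>) * mollifier s n a x)
      = (\<lambda>x. complex_of_real (\<Prod>j\<in>UNIV. (x $ j) ^ \<alpha> j * mollifier_profile s n a 0 (x $ j)))"
    by (simp add: fun_eq_iff mono_pow_def mollifier_def tensor_tower_def prod.distrib)
  then have "integral UNIV (\<lambda>x. complex_of_real (mono_pow x \<alpha>) * mollifier s n a x)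
      = complex_of_real (\<Prod>j\<in>UNIV. \<integral>t. t ^ \<alpha> j * mollifier_profile s n a 0 t \<partial>lborel)"
    by (simp only:)
      (intro integral_of_real_prod_nth integrable_mollifier_profile_mult[OF s_pos s_less_1 a_pos] continuous_intros)
  also have "\<dots> = 0"
    using moment_i by (auto intro: prod_zero)
  finally show ?thesis .
qed

lemma L1_mollifier:
  "integral UNIV (\<lambda>x::real^'n::finite. cmod (mollifier s n a x)) \<le> (((1 + s) / (1 - s)) ^ n) ^ CARD('n)"
proof -
  have int: "integrable lborel (\<lambda>t. \<bar>mollifier_profile s n a 0 t\<bar>)"
    using integrable_mollifier_profile_mult[OF s_pos s_less_1 a_pos, of "\<lambda>_. 1"] by (auto intro: integrable_abs)
  have "(\<lambda>x::real^'n. cmod (mollifier s n a x)) = (\<lambda>x. \<Prod>i\<in>UNIV. \<bar>mollifier_profile s n a 0 (x $ i)\<bar>)"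
    by (simp add: fun_eq_iff mollifier_def tensor_tower_def abs_prod del: of_real_prod)
  then have "integral UNIV (\<lambda>x::real^'n. cmod (mollifier s n a x))
      = (\<integral>x. (\<Prod>i\<in>UNIV. \<bar>mollifier_profile s n a 0 ((x::real^'n) $ i)\<bar>) \<partial>lborel)"
    using integral_lborel[OF integrable_lborel_prod_nth[OF int]] by simp
  also have "\<dots> = (\<Prod>i\<in>(UNIV::'n set). \<integral>t. \<bar>mollifier_profile s n a 0 t\<bar> \<partial>lborel)"
    by (rule integral_lborel_prod_nth[OF int])
  also have "\<dots> \<le> (\<Prod>i\<in>(UNIV::'n set). ((1 + s) / (1 - s)) ^ n)"
    by (intro prod_mono conjI L1_mollifier_profile[OF s_pos s_less_1 a_pos]) simp
  finally show ?thesis by simp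
qed

lemma Rad_mollifier: "0 < Rad (mollifier s n a :: real^'n::finite \<Rightarrow> complex)"
  "Rad (mollifier s n a :: real^'n::finite \<Rightarrow> complex) \<le> real CARD('n) * a"
proof -
  show "0 < Rad (mollifier s n a :: real^'n::finite \<Rightarrow> complex)"
    by (rule Rad_pos[OF bounded_support_mollifier]) (simp add: integral_mollifier)
  have "\<exists>x. (mollifier s n a :: real^'n \<Rightarrow> complex) x \<noteq> 0"
  proof (rule ccontr)
    assume "\<nexists>x. (mollifier s n a :: real^'n \<Rightarrow> complex) x \<noteq> 0"
    then have "(mollifier s n a :: real^'n \<Rightarrow> complex) = (\<lambda>_. 0)" by auto
    then show False using integral_mollifier[where 'n='n] by simp
  qed
  then show "Rad (mollifier s n a :: real^'n::finite \<Rightarrow> complex) \<le> real CARD('n) * a"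
    by (rule Rad_le[OF _ norm_le_if_mollifier_nonzero])
qed

lemma norm_mpd_mollifier_le:
  fixes \<alpha> :: "'n::finite \<Rightarrow> nat"
  assumes "\<And>m t. m \<le> mabs \<alpha> \<Longrightarrow> \<bar>mollifier_profile s n 1 m t\<bar> \<le> C"
  shows "cmod (mpd \<alpha> (mollifier s n a) x) \<le> C ^ CARD('n) / a ^ (mabs \<alpha> + CARD('n))"
proof -
  have bound: "\<bar>mollifier_profile s n a m t\<bar> \<le> C / a ^ Suc m" if "m \<le> mabs \<alpha>" for m t
    using assms[OF that, of "t / a"] a_pos
    by (subst mollifier_profile_rescale) (simp add: divide_right_mono del: power_Suc)
  have "cmod (mpd \<alpha> (mollifier s n a) x) = \<bar>tensor_tower (mollifier_profile s n a) \<alpha> x\<bar>"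
    by (simp add: mollifier_def[abs_def] mpd_tensor_tower[OF deriv_tower_mollifier_profile])
  also have "\<dots> \<le> C ^ CARD('n) / a ^ (mabs \<alpha> + CARD('n))"
    by (rule abs_tensor_tower_le[OF a_pos bound])
  finally show ?thesis .
qed

end

lemma div_power_le_inverse_power:
  fixes B d a R :: real
  assumes "1 \<le> B" "1 \<le> d" "1 \<le> N" "0 < a" "B * d\<^sup>2 * a \<le> 1" "0 < R" "R \<le> d * a"
  shows "B / a ^ N \<le> inverse (R ^ (2 * N))"
proof -
  have "B * R ^ (2 * N) \<le> B * (d * a) ^ (2 * N)"
    using assms by (intro mult_left_mono power_mono) auto
  also have "\<dots> = B * (d\<^sup>2 * a) ^ N * a ^ N"
    by (simp add: power_mult power_mult_distrib power2_eq_square mult_ac)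
  also have "\<dots> \<le> B ^ N * (d\<^sup>2 * a) ^ N * a ^ N"
    using assms power_increasing[of 1 N B] by (intro mult_right_mono) auto
  also have "\<dots> = (B * d\<^sup>2 * a) ^ N * a ^ N"
    by (simp add: power_mult_distrib)
  also have "\<dots> \<le> a ^ N"
    using assms by (intro mult_left_le_one_le power_le_one) auto
  finally show ?thesis
    using assms by (simp add: field_simps)
qed

lemma ex_L1_growth_le:
  assumes "1 < q"
  shows "\<exists>s::real. 0 < s \<and> s < 1 \<and> (((1 + s) / (1 - s)) ^ n) ^ d \<le> q"
proof -
  have "((\<lambda>s::real. (((1 + s) / (1 - s)) ^ n) ^ d) \<longlongrightarrow> (((1 + 0) / (1 - 0)) ^ n) ^ d) (at_right 0)"
    by (intro tendsto_intros) auto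
  then have "\<forall>\<^sub>F s in at_right 0. (((1 + s) / (1 - s)) ^ n) ^ d < q"
    using assms by (simp add: order_tendstoD(2))
  moreover have "\<forall>\<^sub>F s in at_right (0::real). 0 < s \<and> s < 1"
    by (simp add: eventually_at_right_field) (auto intro!: exI[of _ 1])
  ultimately have "\<forall>\<^sub>F s in at_right 0. 0 < s \<and> s < 1 \<and> (((1 + s) / (1 - s)) ^ n) ^ d \<le> q"
    by eventually_elim auto
  then show ?thesis
    by (rule eventually_happens'[rotated]) simp
qed

lemma mollifier_in_Dn:
  fixes s C :: real
  assumes n: "1 \<le> n" and s: "0 < s" "s < 1"
    and L1: "(((1 + s) / (1 - s)) ^ n) ^ CARD('n) \<le> 1 + 1 / real n"
    and C: "1 \<le> C" "\<And>m t. m \<le> n \<Longrightarrow> \<bar>mollifier_profile s n 1 m t\<bar> \<le> C"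
  defines "a \<equiv> 1 / (C ^ CARD('n) * (real CARD('n))\<^sup>2 * real n)"
  shows "(mollifier s n a :: real^'n::finite \<Rightarrow> complex) \<in> Dn n"
proof -
  let ?\<phi> = "mollifier s n a :: real^'n \<Rightarrow> complex" and ?d = "real CARD('n)"
  have d: "1 \<le> ?d" and B: "1 \<le> C ^ CARD('n)"
    using C(1) by (simp_all add: Suc_leI one_le_power)
  have a: "0 < a" "C ^ CARD('n) * ?d\<^sup>2 * a \<le> 1"
    using n d B by (simp_all add: a_def)
  have "1 \<le> ?d * C ^ CARD('n)"
    using mult_mono[OF d B] by simp
  then have "?d * a \<le> 1 / real n"
    using n d by (simp add: a_def power2_eq_square field_simps)
  then have Rad_le: "Rad ?\<phi> \<le> 1 / real n"
    by (rule order.trans[OF Rad_mollifier(2)[OF s a(1)]])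
  have "cmod (mpd \<alpha> ?\<phi> x) \<le> inverse (Rad ?\<phi> ^ (2 * (mabs \<alpha> + CARD('n))))" if "mabs \<alpha> \<le> n" for \<alpha> x
  proof -
    have "cmod (mpd \<alpha> ?\<phi> x) \<le> C ^ CARD('n) / a ^ (mabs \<alpha> + CARD('n))"
      using C(2) that by (intro norm_mpd_mollifier_le[OF s a(1)]) auto
    also have "\<dots> \<le> inverse (Rad ?\<phi> ^ (2 * (mabs \<alpha> + CARD('n))))"
      using d B a Rad_mollifier[OF s a(1)] by (intro div_power_le_inverse_power) (auto simp: Suc_leI)
    finally show ?thesis .
  qed
  moreover have "Im (?\<phi> x) = 0" for x
    by (simp add: mollifier_def)
  ultimately show ?thesis
    using n Rad_le order.trans[OF L1_mollifier[OF s a(1)] L1]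
    by (auto simp: Dn_def mollifier_in_D0[OF s a(1)] integral_mollifier[OF s a(1)]
        moment_mollifier_eq_0[OF s a(1)] mollifier_minus[OF s a(1)])
qed

lemma Dn_nonempty:
  assumes "1 \<le> n"
  shows "(Dn n :: (real^'n::finite \<Rightarrow> complex) set) \<noteq> {}"
proof -
  obtain s :: real where s: "0 < s" "s < 1" and L1: "(((1 + s) / (1 - s)) ^ n) ^ CARD('n) \<le> 1 + 1 / real n"
    using ex_L1_growth_le[of "1 + 1 / real n"] assms by auto
  obtain C where "1 \<le> C" "\<forall>m\<le>n. \<forall>t. \<bar>mollifier_profile s n 1 m t\<bar> \<le> C"
    using deriv_tower_bounded[OF deriv_tower_mollifier_profile, where r=1]
      mollifier_profile_vanishing[OF s zero_less_one] by blast
  then show ?thesis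
    using mollifier_in_Dn[OF assms s L1] by blast
qed

lemma Dn_Suc_subset: "Dn (Suc n) \<subseteq> Dn n"
proof (cases "n = 0")
  case False
  then have "1 / real (Suc n) \<le> 1 / real n"
    by (simp add: frac_le)
  then show ?thesis
    using False unfolding Dn_def by (auto 0 3 intro: order_trans)
qed (simp add: Dn_def)

lemma Inter_Dn_empty: "(\<Inter>n. Dn n :: (real^'n::finite \<Rightarrow> complex) set) = {}"
proof (rule ccontr)
  assume "\<not> ?thesis"
  then obtain \<phi> :: "real^'n \<Rightarrow> complex" where \<phi>: "\<And>n. \<phi> \<in> Dn n" by auto
  then have "\<phi> \<in> D0" "integral UNIV \<phi> = 1"
    using \<phi>[of 1] by (auto simp: Dn_def)
  then have R: "0 < Rad \<phi>"
    by (intro Rad_pos) (simp_all add: D0_def)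
  obtain n :: nat where n: "1 / Rad \<phi> < real n"
    using reals_Archimedean2 by blast
  moreover have "0 < real n"
    using n R by (meson less_trans zero_less_divide_1_iff)
  ultimately have "0 < n" "1 / real n < Rad \<phi>"
    using R by (simp_all add: field_simps)
  moreover have "Rad \<phi> \<le> 1 / real n" if "0 < n"
    using \<phi>[of n] that by (auto simp: Dn_def)
  ultimately show False by simp
qed

theorem theorem2p2:
  shows "(\<forall>n. (Dn (Suc n) :: (real^'n::finite \<Rightarrow> complex) set) \<subseteq> Dn n)
    \<and> (\<forall>n\<ge>1. (Dn n :: (real^'n \<Rightarrow> complex) set) \<noteq> {})
    \<and> (\<Inter>n. (Dn n :: (real^'n \<Rightarrow> complex) set)) = {}"
  using Dn_Suc_subset Dn_nonempty Inter_Dn_empty by blast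

end
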